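(* Let $\mathcal{X}$ be a finite set of $n$ agents and $\Gamma$ a merit distribution on $\mathbb{R}^{\mathcal{X}}$. Let $\pi^{TS}_\Gamma$ be the Thompson sampling ranking distribution: draw a merit vector $v\sim\Gamma$ and rank the agents by decreasing $v_x$. Then $\pi^{TS}_\Gamma$ is $1$-fair with respect to $\Gamma$.
   Context: A ranking of $\mathcal{X}$ is a bijection $\sigma:\{1,\dots,n\}\to\mathcal{X}$ ($\sigma(k)$ is the agent in position $k$); a ranking distribution $\pi$ is a probability distribution over rankings, with marginals $P_\pi(x,k)=\sum_{\sigma:\sigma(k)=x}\pi(\sigma)$. A merit distribution $\Gamma$ is a probability distribution over $v=(v_x)_{x\in\mathcal{X}}\in\mathbb{R}^{\mathcal{X}}$ such that every $v$ in its support has pairwise distinct entries. $\mathrm{Top}_k(x;v)$ denotes the event $|\{x': v_{x'}>v_x\}|<k$. For $\rho\in[0,1]$, $\pi$ is $\rho$-fair with respect to $\Gamma$ if $\sum_{k'=1}^{k}P_\pi(x,k')\ge\rho\cdot\Pr_{v\sim\Gamma}[\mathrm{Top}_k(x;v)]$ for all agents $x$ and positions $k$. *)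

theory Defs
  imports "HOL-Probability.Probability"
begin

definition rankings :: "(nat \<Rightarrow> 'a::finite) set" where
  "rankings = {\<sigma>. bij_betw \<sigma> {1..CARD('a)} UNIV \<and> (\<forall>k. k \<notin> {1..CARD('a)} \<longrightarrow> \<sigma> k = undefined)}"

definition is_ranking_dist :: "((nat \<Rightarrow> 'a::finite) \<Rightarrow> real) \<Rightarrow> bool" where
  "is_ranking_dist \<pi> \<longleftrightarrow> (\<forall>\<sigma>. \<pi> \<sigma> \<ge> 0) \<and> (\<forall>\<sigma>. \<sigma> \<notin> rankings \<longrightarrow> \<pi> \<sigma> = 0)
      \<and> (\<Sum>\<sigma>\<in>rankings. \<pi> \<sigma>) = 1"

definition marginal :: "((nat \<Rightarrow> 'a::finite) \<Rightarrow> real) \<Rightarrow> 'a \<Rightarrow> nat \<Rightarrow> real" where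
  "marginal \<pi> x k = (\<Sum>\<sigma>\<in>{\<sigma>\<in>rankings. \<sigma> k = x}. \<pi> \<sigma>)"

definition merit_dist :: "('a::finite \<Rightarrow> real) measure \<Rightarrow> bool" where
  "merit_dist \<Gamma> \<longleftrightarrow> prob_space \<Gamma> \<and> sets \<Gamma> = sets (PiM UNIV (\<lambda>_. borel))
      \<and> (AE v in \<Gamma>. inj v)"

definition Top :: "nat \<Rightarrow> 'a::finite \<Rightarrow> ('a \<Rightarrow> real) \<Rightarrow> bool" where
  "Top k x v \<longleftrightarrow> card {x'. v x' > v x} < k"

definition rho_fair :: "real \<Rightarrow> ('a::finite \<Rightarrow> real) measure \<Rightarrow> ((nat \<Rightarrow> 'a) \<Rightarrow> real) \<Rightarrow> bool" where
  "rho_fair \<rho> \<Gamma> \<pi> \<longleftrightarrow> (\<forall>x. \<forall>k\<in>{1..CARD('a)}.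
      (\<Sum>k'=1..k. marginal \<pi> x k') \<ge> \<rho> * measure \<Gamma> {v\<in>space \<Gamma>. Top k x v})"

definition sort_ranking :: "('a::finite \<Rightarrow> real) \<Rightarrow> nat \<Rightarrow> 'a" where
  "sort_ranking v k = (if k \<in> {1..CARD('a)} then (THE x. card {x'. v x' > v x} + 1 = k) else undefined)"

definition thompson :: "('a::finite \<Rightarrow> real) measure \<Rightarrow> (nat \<Rightarrow> 'a) \<Rightarrow> real" where
  "thompson \<Gamma> \<sigma> = measure \<Gamma> {v\<in>space \<Gamma>. sort_ranking v = \<sigma>}"

end

theory Submission
  imports Defs
begin

(* Ties have probability zero, and for a merit vector v without ties the ranking by decreasing
   merit puts agent x at position 1 + #{x'. v x' > v x}.  Hence, up to a null set, Top_k(x; v)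
   is the event that Thompson sampling ranks x among the first k positions, and the probability
   of that event is the sum of the marginals of x over the positions 1..k. *)

definition merit_rank :: "('a::finite \<Rightarrow> real) \<Rightarrow> 'a \<Rightarrow> nat" where
  "merit_rank v x = card {x'. v x' > v x}"

lemma Top_iff_merit_rank: "Top k x v \<longleftrightarrow> merit_rank v x < k"
  by (simp add: Top_def merit_rank_def)

lemma sort_ranking_eq_The:
  fixes v :: "'a::finite \<Rightarrow> real"
  shows "k \<in> {1..CARD('a)} \<Longrightarrow> sort_ranking v k = (THE x. Suc (merit_rank v x) = k)"
  by (simp add: sort_ranking_def merit_rank_def)

lemma merit_rank_less_card:
  fixes v :: "'a::finite \<Rightarrow> real"
  shows "merit_rank v x < CARD('a)"
proof -
  have "{x'. v x' > v x} \<subset> UNIV" by auto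
  then show ?thesis
    unfolding merit_rank_def by (simp add: psubset_card_mono)
qed

lemma merit_rank_strict_antimono:
  assumes "v x < v y"
  shows "merit_rank v y < merit_rank v x"
proof -
  have "{x'. v x' > v y} \<subset> {x'. v x' > v x}"
    using assms by auto
  then show ?thesis
    unfolding merit_rank_def by (simp add: psubset_card_mono)
qed

lemma inj_merit_rank:
  assumes "inj v"
  shows "inj (merit_rank v)"
proof (rule injI, rule ccontr)
  fix x y
  assume "merit_rank v x = merit_rank v y" and "x \<noteq> y"
  moreover have "v x \<noteq> v y"
    using assms \<open>x \<noteq> y\<close> by (auto dest: injD)
  ultimately show False
    by (metis linorder_neq_iff less_irrefl merit_rank_strict_antimono)
qed

lemma range_merit_rank:
  fixes v :: "'a::finite \<Rightarrow> real"
  assumes "inj v"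
  shows "range (merit_rank v) = {..<CARD('a)}"
proof (rule card_subset_eq)
  show "range (merit_rank v) \<subseteq> {..<CARD('a)}"
    using merit_rank_less_card by auto
  show "card (range (merit_rank v)) = card {..<CARD('a)}"
    using inj_merit_rank[OF assms] by (simp add: card_image)
qed simp

lemma sort_ranking_merit_rank:
  fixes v :: "'a::finite \<Rightarrow> real"
  assumes "inj v"
  shows "sort_ranking v (Suc (merit_rank v x)) = x"
proof -
  have "Suc (merit_rank v x) \<in> {1..CARD('a)}"
    using merit_rank_less_card[of v x] by simp
  moreover have "(THE y. Suc (merit_rank v y) = Suc (merit_rank v x)) = x"
    by (rule the_equality) (auto dest: injD[OF inj_merit_rank[OF assms]])
  ultimately show ?thesis
    by (simp add: sort_ranking_eq_The)
qed

lemma sort_ranking_in_rankings: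
  fixes v :: "'a::finite \<Rightarrow> real"
  assumes "inj v"
  shows "sort_ranking v \<in> rankings"
proof -
  have positions: "\<exists>y. k = Suc (merit_rank v y)" if "k \<in> {1..CARD('a)}" for k
  proof -
    have "k - 1 \<in> range (merit_rank v)"
      using that range_merit_rank[OF assms] by auto
    then obtain y where "merit_rank v y = k - 1"
      by auto
    with that have "k = Suc (merit_rank v y)"
      by simp
    then show ?thesis
      by blast
  qed
  have "bij_betw (sort_ranking v) {1..CARD('a)} UNIV"
  proof (rule bij_betw_byWitness[where f' = "\<lambda>x. Suc (merit_rank v x)"])
    show "\<forall>k\<in>{1..CARD('a)}. Suc (merit_rank v (sort_ranking v k)) = k"
    proof
      fix k
      assume "k \<in> {1..CARD('a)}"
      then obtain y where "k = Suc (merit_rank v y)"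
        using positions by blast
      then show "Suc (merit_rank v (sort_ranking v k)) = k"
        by (simp add: sort_ranking_merit_rank[OF assms])
    qed
    show "(\<lambda>x. Suc (merit_rank v x)) ` UNIV \<subseteq> {1..CARD('a)}"
      using merit_rank_less_card by (auto simp: Suc_le_eq)
  qed (simp_all add: sort_ranking_merit_rank[OF assms])
  moreover have "sort_ranking v k = undefined" if "k \<notin> {1..CARD('a)}" for k
    using that by (auto simp: sort_ranking_def)
  ultimately show ?thesis
    unfolding rankings_def by blast
qed

lemma sort_ranking_Top:
  assumes "inj v" and "Top k x v"
  shows "sort_ranking v \<in> {\<sigma>\<in>rankings. x \<in> \<sigma> ` {1..k}}"
proof -
  have "Suc (merit_rank v x) \<in> {1..k}"
    using assms(2) by (simp add: Top_iff_merit_rank Suc_le_eq)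
  then have "x \<in> sort_ranking v ` {1..k}"
    by (metis imageI sort_ranking_merit_rank[OF assms(1)])
  with sort_ranking_in_rankings[OF assms(1)] show ?thesis
    by simp
qed

lemma finite_rankings: "finite (rankings :: (nat \<Rightarrow> 'a::finite) set)"
proof (rule finite_subset)
  show "rankings \<subseteq> PiE {1..CARD('a)} (\<lambda>_. UNIV :: 'a set)"
    by (auto simp: rankings_def PiE_def extensional_def)
qed (simp add: finite_PiE)

lemma inj_on_ranking:
  fixes \<sigma> :: "nat \<Rightarrow> 'a::finite"
  shows "\<sigma> \<in> rankings \<Longrightarrow> inj_on \<sigma> {1..CARD('a)}"
  by (simp add: rankings_def bij_betw_def)

lemma sum_marginal_eq:
  fixes x :: "'a::finite"
  assumes "k \<le> CARD('a)"
  shows "(\<Sum>k'=1..k. marginal \<pi> x k') = (\<Sum>\<sigma>\<in>{\<sigma>\<in>rankings. x \<in> \<sigma> ` {1..k}}. \<pi> \<sigma>)"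
proof -
  have positions_disjoint:
    "{\<sigma>\<in>rankings. \<sigma> i = x} \<inter> {\<sigma>\<in>rankings. \<sigma> j = x} = {}"
    if "i \<in> {1..k}" "j \<in> {1..k}" "i \<noteq> j" for i j
  proof (rule equals0I)
    fix \<sigma>
    assume "\<sigma> \<in> {\<sigma>\<in>rankings. \<sigma> i = x} \<inter> {\<sigma>\<in>rankings. \<sigma> j = x}"
    then have "\<sigma> \<in> rankings" "\<sigma> i = \<sigma> j"
      by auto
    moreover have "i \<in> {1..CARD('a)}" "j \<in> {1..CARD('a)}"
      using that assms by auto
    ultimately show False
      using inj_on_ranking \<open>i \<noteq> j\<close> by (metis inj_on_eq_iff)
  qed
  have "finite {\<sigma>\<in>rankings. \<sigma> k' = x}" for k'
    by (rule finite_subset[OF _ finite_rankings]) auto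
  then have "(\<Sum>\<sigma>\<in>(\<Union>k'\<in>{1..k}. {\<sigma>\<in>rankings. \<sigma> k' = x}). \<pi> \<sigma>)
      = (\<Sum>k'=1..k. \<Sum>\<sigma>\<in>{\<sigma>\<in>rankings. \<sigma> k' = x}. \<pi> \<sigma>)"
    using positions_disjoint by (intro sum.UNION_disjoint) auto
  moreover have "(\<Union>k'\<in>{1..k}. {\<sigma>\<in>rankings. \<sigma> k' = x}) = {\<sigma>\<in>rankings. x \<in> \<sigma> ` {1..k}}"
    by auto
  ultimately show ?thesis
    unfolding marginal_def by simp
qed

(* The ranking map itself has an uncountable codomain; its events are measurable because it
   factors through the finitely many outcomes of the pairwise comparisons. *)
definition merit_comparisons :: "('a \<Rightarrow> real) \<Rightarrow> 'a \<times> 'a \<Rightarrow> bool" where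
  "merit_comparisons v p \<longleftrightarrow> v (fst p) < v (snd p)"

lemma sort_ranking_cong_comparisons:
  "merit_comparisons v = merit_comparisons w \<Longrightarrow> sort_ranking v = sort_ranking w"
  unfolding sort_ranking_def merit_comparisons_def fun_eq_iff by simp

lemma merit_comparisons_measurable:
  "merit_comparisons \<in> PiM UNIV (\<lambda>_::'a::finite. borel) \<rightarrow>\<^sub>M count_space UNIV"
proof (subst measurable_count_space_eq2_countable, safe)
  fix c :: "'a \<times> 'a \<Rightarrow> bool"
  have "merit_comparisons -` {c} \<inter> space (PiM UNIV (\<lambda>_. borel))
      = {v \<in> space (PiM UNIV (\<lambda>_. borel)). \<forall>a b. (v a < v b) = c (a, b)}"
    by (auto simp: merit_comparisons_def fun_eq_iff)
  also have "\<dots> \<in> sets (PiM UNIV (\<lambda>_. borel))"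
    by measurable
  finally show "merit_comparisons -` {c} \<inter> space (PiM UNIV (\<lambda>_. borel)) \<in> sets (PiM UNIV (\<lambda>_. borel))" .
qed simp

lemma sort_ranking_event_measurable:
  fixes M :: "('a::finite \<Rightarrow> real) measure"
  assumes "sets M = sets (PiM UNIV (\<lambda>_. borel))"
  shows "{v\<in>space M. sort_ranking v = \<sigma>} \<in> sets M"
proof -
  have "merit_comparisons \<in> M \<rightarrow>\<^sub>M count_space UNIV"
    using merit_comparisons_measurable by (simp add: measurable_cong_sets[OF assms refl])
  then have "merit_comparisons -` (merit_comparisons ` {v. sort_ranking v = \<sigma>}) \<inter> space M \<in> sets M"
    by (rule measurable_sets) simp
  also have "merit_comparisons -` (merit_comparisons ` {v. sort_ranking v = \<sigma>}) \<inter> space M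
      = {v\<in>space M. sort_ranking v = \<sigma>}"
  proof -
    have "merit_comparisons v \<in> merit_comparisons ` {w. sort_ranking w = \<sigma>} \<longleftrightarrow> sort_ranking v = \<sigma>" for v
      by (auto dest: sort_ranking_cong_comparisons)
    then show ?thesis
      by auto
  qed
  finally show ?thesis .
qed

theorem proposition3:
  fixes \<Gamma> :: "('a::finite \<Rightarrow> real) measure"
  assumes "merit_dist \<Gamma>"
  shows "rho_fair 1 \<Gamma> (thompson \<Gamma>)"
  unfolding rho_fair_def
proof (intro allI ballI)
  fix x :: 'a and k
  assume "k \<in> {1..CARD('a)}"
  interpret prob_space \<Gamma>
    using assms by (simp add: merit_dist_def)
  define E where "E \<sigma> = {v\<in>space \<Gamma>. sort_ranking v = \<sigma>}" for \<sigma>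
  define S where "S = {\<sigma>\<in>rankings. x \<in> \<sigma> ` {1..k}}"
  have E_sets: "E ` S \<subseteq> sets \<Gamma>"
    using assms by (auto simp: E_def merit_dist_def intro: sort_ranking_event_measurable)
  have "finite S"
    unfolding S_def by (rule finite_subset[OF _ finite_rankings]) auto
  have "AE v in \<Gamma>. inj v"
    using assms by (simp add: merit_dist_def)
  then have "AE v in \<Gamma>. v \<in> {v\<in>space \<Gamma>. Top k x v} \<longrightarrow> v \<in> (\<Union>\<sigma>\<in>S. E \<sigma>)"
    by eventually_elim (auto simp: E_def S_def dest: sort_ranking_Top)
  then have "measure \<Gamma> {v\<in>space \<Gamma>. Top k x v} \<le> measure \<Gamma> (\<Union>\<sigma>\<in>S. E \<sigma>)"
    using \<open>finite S\<close> E_sets by (intro finite_measure_mono_AE) auto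
  also have "\<dots> \<le> (\<Sum>\<sigma>\<in>S. measure \<Gamma> (E \<sigma>))"
    using \<open>finite S\<close> E_sets by (rule finite_measure_subadditive_finite)
  also have "\<dots> = (\<Sum>\<sigma>\<in>S. thompson \<Gamma> \<sigma>)"
    by (simp add: E_def thompson_def)
  also have "\<dots> = (\<Sum>k'=1..k. marginal (thompson \<Gamma>) x k')"
    unfolding S_def using \<open>k \<in> {1..CARD('a)}\<close> by (intro sum_marginal_eq[symmetric]) simp
  finally show "1 * measure \<Gamma> {v\<in>space \<Gamma>. Top k x v} \<le> (\<Sum>k'=1..k. marginal (thompson \<Gamma>) x k')"
    by simp
qed

end
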